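(* Let $\mathcal{L}$ be a (one-sorted) relational language and $\mathcal{M}$ an $\mathcal{L}$-structure. If $\mathcal{M}$ has an $\equiv^{\mathcal{M}}$-equivalence class of size $\kappa$, then $\mathrm{Aut}(\mathcal{M})$ has a subgroup isomorphic to $\mathrm{Perm}(\kappa)$, the group of all permutations of $\kappa$.
   Context: Let $\Phi$ be the collection of atomic formulas of the form $R(z_1,\dots,z_k)$ with $R$ a relation symbol of $\mathcal{L}$ and each $z_j$ a variable. For $a,b\in\mathcal{M}$, $\mathcal{M}\models a\equiv b$ means: for every $\psi(x,\mathbf{y})\in\Phi$ ($x$ a single variable) and every tuple $\mathbf{c}$ in $\mathcal{M}$, $\mathcal{M}\models\psi(a,\mathbf{c})\leftrightarrow\psi(b,\mathbf{c})$; this defines an equivalence relation $\equiv^{\mathcal{M}}$. *)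

theory Defs
  imports "HOL-Algebra.Algebra" "HOL-Library.Equipollence"
begin

(* A one-sorted relational language: relation symbols of type 'r with arities ar.
   An L-structure with universe the type 'a: interpretation I R (a list of length ar R). *)

(* Instantiate an atomic formula R(z_1..z_k): positions None are the variable x,
   positions Some c are the remaining variables y, assigned to c. *)
definition subst_hole :: "'a \<Rightarrow> 'a option list \<Rightarrow> 'a list" where
  "subst_hole a t = map (\<lambda>p. case p of None \<Rightarrow> a | Some c \<Rightarrow> c) t"

definition indisc :: "('r \<Rightarrow> nat) \<Rightarrow> ('r \<Rightarrow> 'a list \<Rightarrow> bool) \<Rightarrow> 'a \<Rightarrow> 'a \<Rightarrow> bool" where
  "indisc ar I a b \<longleftrightarrow>
     (\<forall>R t. length t = ar R \<longrightarrow> (I R (subst_hole a t) \<longleftrightarrow> I R (subst_hole b t)))"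

definition is_aut :: "('r \<Rightarrow> nat) \<Rightarrow> ('r \<Rightarrow> 'a list \<Rightarrow> bool) \<Rightarrow> ('a \<Rightarrow> 'a) \<Rightarrow> bool" where
  "is_aut ar I f \<longleftrightarrow> bij f \<and>
     (\<forall>R xs. length xs = ar R \<longrightarrow> (I R (map f xs) \<longleftrightarrow> I R xs))"

definition Aut :: "('r \<Rightarrow> nat) \<Rightarrow> ('r \<Rightarrow> 'a list \<Rightarrow> bool) \<Rightarrow> ('a \<Rightarrow> 'a) monoid" where
  "Aut ar I = (BijGroup (UNIV :: 'a set))\<lparr>carrier := {f \<in> Bij UNIV. is_aut ar I f}\<rparr>"

end

(* A permutation of the class C of a that fixes everything outside C sends every element
   to an indiscernible one, and indiscernible entries of a tuple can be exchanged one at a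
   time without changing the truth of an atomic formula; so it is an automorphism.  These
   permutations form a subgroup of Aut(M) isomorphic to Sym(C), and Sym(C) is isomorphic
   to Sym(K) by transport along a bijection from C onto K. *)

theory Submission
  imports Defs
begin

lemma carrier_BijGroup_UNIV: "carrier (BijGroup UNIV) = {f. bij f}"
  by (auto simp: BijGroup_def Bij_def)

lemma mult_BijGroup: "f \<in> Bij S \<Longrightarrow> g \<in> Bij S \<Longrightarrow> f \<otimes>\<^bsub>BijGroup S\<^esub> g = compose S f g"
  by (simp add: BijGroup_def)

lemma mult_BijGroup_UNIV: "bij f \<Longrightarrow> bij g \<Longrightarrow> f \<otimes>\<^bsub>BijGroup UNIV\<^esub> g = f \<circ> g"
  by (simp add: mult_BijGroup Bij_def compose_def restrict_UNIV comp_def)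

lemma inv_BijGroup_UNIV: "bij f \<Longrightarrow> m_inv (BijGroup UNIV) f = inv_into UNIV f"
  by (simp add: inv_BijGroup Bij_def restrict_UNIV)

lemma subgroup_BijGroup_UNIV_I:
  assumes "\<And>f. f \<in> H \<Longrightarrow> bij f" and "id \<in> H"
    and "\<And>f g. f \<in> H \<Longrightarrow> g \<in> H \<Longrightarrow> f \<circ> g \<in> H"
    and "\<And>f. f \<in> H \<Longrightarrow> inv_into UNIV f \<in> H"
  shows "subgroup H (BijGroup UNIV)"
  by (rule group.subgroupI[OF group_BijGroup])
     (use assms in \<open>auto simp: carrier_BijGroup_UNIV mult_BijGroup_UNIV inv_BijGroup_UNIV\<close>)

lemma subgroup_permutes: "subgroup {p. p permutes A} (BijGroup UNIV)"
  by (rule subgroup_BijGroup_UNIV_I)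
     (auto simp: permutes_bij permutes_compose permutes_inv)

lemma permutes_group_iso:
  assumes "bij_betw f A B"
  shows "(BijGroup UNIV)\<lparr>carrier := {p. p permutes A}\<rparr>
    \<cong> (BijGroup UNIV)\<lparr>carrier := {p. p permutes B}\<rparr>" (is "?G \<cong> ?H")
proof (rule is_isoI, rule isoI)
  show "map_permutation A f \<in> hom ?G ?H"
  proof (rule homI)
    fix p q
    assume "p \<in> carrier ?G" and "q \<in> carrier ?G"
    then have p: "p permutes A" and q: "q permutes A"
      by simp_all
    have "map_permutation A f (p \<circ> q) = map_permutation A f p \<circ> map_permutation A f q"
      using bij_betw_imp_inj_on[OF assms] q by (rule map_permutation_compose')
    then show "map_permutation A f (p \<otimes>\<^bsub>?G\<^esub> q)
        = map_permutation A f p \<otimes>\<^bsub>?H\<^esub> map_permutation A f q"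
      by (simp add: mult_BijGroup_UNIV permutes_bij[OF p] permutes_bij[OF q]
          permutes_bij[OF map_permutation_permutes[OF assms p]]
          permutes_bij[OF map_permutation_permutes[OF assms q]])
  qed (simp add: map_permutation_permutes[OF assms])
  have "map_permutation A f = (\<lambda>p x. if x \<in> B then f (p (inv_into A f x)) else x)"
    using assms by (auto simp: map_permutation_def restrict_id_def bij_betw_def fun_eq_iff)
  then show "bij_betw (map_permutation A f) (carrier ?G) (carrier ?H)"
    using bij_betw_permutations[OF assms] by simp
qed

lemma restrict_permutes_in_Bij: "p permutes A \<Longrightarrow> restrict p A \<in> Bij A"
  by (simp add: Bij_def permutes_imp_bij)

lemma permutes_group_iso_BijGroup:
  "(BijGroup UNIV)\<lparr>carrier := {p. p permutes A}\<rparr> \<cong> BijGroup A" (is "?G \<cong> _")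
proof (rule is_isoI, rule isoI)
  show "(\<lambda>p. restrict p A) \<in> hom ?G (BijGroup A)"
  proof (rule homI)
    fix p q
    assume "p \<in> carrier ?G" and "q \<in> carrier ?G"
    then have p: "p permutes A" and q: "q permutes A"
      by simp_all
    have "restrict (p \<circ> q) A = compose A (restrict p A) (restrict q A)"
      using q by (auto simp: compose_def permutes_in_image fun_eq_iff)
    then show "restrict (p \<otimes>\<^bsub>?G\<^esub> q) A = restrict p A \<otimes>\<^bsub>BijGroup A\<^esub> restrict q A"
      using p q
      by (simp add: mult_BijGroup_UNIV mult_BijGroup permutes_bij restrict_permutes_in_Bij)
  qed (simp add: restrict_permutes_in_Bij BijGroup_def)
  show "bij_betw (\<lambda>p. restrict p A) (carrier ?G) (carrier (BijGroup A))"
  proof (rule bij_betw_byWitness[where f' = "\<lambda>s. restrict_id s A"])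
    show "\<forall>p \<in> carrier ?G. restrict_id (restrict p A) A = p"
      by (auto simp: restrict_id_def fun_eq_iff permutes_not_in)
    show "\<forall>s \<in> carrier (BijGroup A). restrict (restrict_id s A) A = s"
      by (auto simp: BijGroup_def Bij_def fun_eq_iff extensional_def)
    show "(\<lambda>p. restrict p A) ` carrier ?G \<subseteq> carrier (BijGroup A)"
      by (auto simp: restrict_permutes_in_Bij BijGroup_def)
    show "(\<lambda>s. restrict_id s A) ` carrier (BijGroup A) \<subseteq> carrier ?G"
      by (auto simp: BijGroup_def Bij_def intro: permutes_restrict_id)
  qed
qed

lemma indisc_refl: "indisc ar I x x"
  by (simp add: indisc_def)

lemma indisc_sym: "indisc ar I x y \<Longrightarrow> indisc ar I y x"
  by (simp add: indisc_def)

lemma indisc_trans: "indisc ar I x y \<Longrightarrow> indisc ar I y z \<Longrightarrow> indisc ar I x z"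
  by (simp add: indisc_def)

lemma indisc_replace:
  assumes "indisc ar I x y" and "length (p @ x # s) = ar R"
  shows "I R (p @ x # s) \<longleftrightarrow> I R (p @ y # s)"
proof -
  let ?t = "map Some p @ None # map Some s"
  have "subst_hole z ?t = p @ z # s" for z
    by (simp add: subst_hole_def comp_def)
  moreover have "length ?t = ar R"
    using assms(2) by simp
  ultimately show ?thesis
    using assms(1) unfolding indisc_def by metis
qed

lemma indisc_replace_suffix:
  assumes "list_all2 (indisc ar I) xs ys" and "length (p @ xs) = ar R"
  shows "I R (p @ xs) \<longleftrightarrow> I R (p @ ys)"
  using assms
proof (induction xs ys arbitrary: p rule: list_all2_induct)
  case Nil
  then show ?case by simp
next
  case (Cons x xs y ys)
  have "I R (p @ x # xs) \<longleftrightarrow> I R (p @ y # xs)"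
    using indisc_replace Cons by metis
  also have "\<dots> \<longleftrightarrow> I R ((p @ [y]) @ ys)"
    using Cons.IH[of "p @ [y]"] Cons.prems by simp
  finally show ?case by simp
qed

lemma is_aut_if_indisc:
  assumes "bij h" and "\<And>x. indisc ar I x (h x)"
  shows "is_aut ar I h"
  unfolding is_aut_def
proof (intro conjI allI impI)
  fix R and xs :: "'a list"
  assume "length xs = ar R"
  moreover have "list_all2 (indisc ar I) xs (map h xs)"
    by (simp add: list_all2_conv_all_nth assms(2))
  ultimately show "I R (map h xs) \<longleftrightarrow> I R xs"
    using indisc_replace_suffix[of ar I xs "map h xs" "[]" R] by simp
qed (rule assms(1))

lemma permutes_indisc_class_is_aut:
  assumes "p permutes {b. indisc ar I a b}"
  shows "is_aut ar I p"
proof (rule is_aut_if_indisc)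
  show "bij p"
    using assms by (rule permutes_bij)
  show "indisc ar I x (p x)" for x
    using permutes_in_image[OF assms, of x] permutes_not_in[OF assms, of x]
    by (cases "indisc ar I a x") (auto intro: indisc_refl indisc_sym indisc_trans)
qed

lemma is_aut_comp: "is_aut ar I f \<Longrightarrow> is_aut ar I g \<Longrightarrow> is_aut ar I (f \<circ> g)"
  by (auto simp: is_aut_def bij_comp simp flip: map_map)

lemma is_aut_inv:
  fixes f :: "'a \<Rightarrow> 'a"
  assumes "is_aut ar I f"
  shows "is_aut ar I (inv_into UNIV f)"
  unfolding is_aut_def
proof (intro conjI allI impI)
  have "bij f"
    using assms by (simp add: is_aut_def)
  then show "bij (inv_into UNIV f)"
    by (rule bij_imp_bij_inv)
  fix R and xs :: "'a list"
  assume "length xs = ar R"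
  then have "I R (map f (map (inv_into UNIV f) xs)) \<longleftrightarrow> I R (map (inv_into UNIV f) xs)"
    using assms unfolding is_aut_def by (metis length_map)
  moreover have "map f (map (inv_into UNIV f) xs) = xs"
    using \<open>bij f\<close> by (simp add: comp_def bij_is_surj surj_f_inv_f)
  ultimately show "I R (map (inv_into UNIV f) xs) \<longleftrightarrow> I R xs"
    by simp
qed

lemma subgroup_is_aut: "subgroup {f \<in> Bij UNIV. is_aut ar I f} (BijGroup UNIV)"
  by (rule subgroup_BijGroup_UNIV_I)
     (auto simp: Bij_def is_aut_comp is_aut_inv is_aut_if_indisc indisc_refl bij_comp
       bij_imp_bij_inv)

lemma subgroup_permutes_indisc_class:
  "subgroup {p. p permutes {b. indisc ar I a b}} (Aut ar I)"
  unfolding Aut_def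
  by (rule group.subgroup_incl[OF group_BijGroup subgroup_permutes subgroup_is_aut])
     (auto simp: Bij_def permutes_bij permutes_indisc_class_is_aut)

theorem corollary5p3:
  fixes ar :: "'r \<Rightarrow> nat" and I :: "'r \<Rightarrow> 'a list \<Rightarrow> bool" and a :: 'a
    and K :: "'k set"
  assumes "{b. indisc ar I a b} \<approx> K"
  shows "\<exists>H. subgroup H (Aut ar I) \<and> (Aut ar I)\<lparr>carrier := H\<rparr> \<cong> BijGroup K"
proof (intro exI conjI)
  let ?C = "{b. indisc ar I a b}"
  obtain f where f: "bij_betw f ?C K"
    using assms unfolding eqpoll_def by blast
  show "subgroup {p. p permutes ?C} (Aut ar I)"
    by (rule subgroup_permutes_indisc_class)
  have "(Aut ar I)\<lparr>carrier := {p. p permutes ?C}\<rparr>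
      = (BijGroup UNIV)\<lparr>carrier := {p. p permutes ?C}\<rparr>"
    by (simp add: Aut_def)
  also have "\<dots> \<cong> (BijGroup UNIV)\<lparr>carrier := {p. p permutes K}\<rparr>"
    using f by (rule permutes_group_iso)
  also have "\<dots> \<cong> BijGroup K"
    by (rule permutes_group_iso_BijGroup)
  finally show "(Aut ar I)\<lparr>carrier := {p. p permutes ?C}\<rparr> \<cong> BijGroup K" .
qed

end
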